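(* Let $L$ be a positive integer, let $\omega_1,\omega_2$ be completely multiplicative complex-valued functions on the positive integers, and let $K$ be an arbitrary complex-valued function on the positive divisors of $L$. For $g\mid L$ define \[ J(g)=\sum_{a\mid g}\sum_{b\mid \frac Lg}\mu(a)\mu(b)\omega_2(a)\omega_1(b)\,K\Big(\frac{bg}{a}\Big). \] Then for every factorization $L=AB$, \[ K(B)=\Big(\prod_{p\mid L}(1-\omega_1(p)\omega_2(p))^{-1}\Big)\sum_{\substack{d\mid A,\ e\mid B\\ (d,e)=1}}\omega_1(d)\omega_2(e)\,J\Big(\frac{Bd}{e}\Big). \]
   Context: $\mu$ is the Möbius function; the product is over primes $p$ dividing $L$. *)

theory Defs
  imports "HOL-Computational_Algebra.Computational_Algebra"
begin

definition moebius_mu :: "nat \<Rightarrow> complex" where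
  "moebius_mu n = (if n = 0 \<or> \<not> squarefree n then 0
                   else (-1) ^ card (prime_factors n))"

definition completely_multiplicative :: "(nat \<Rightarrow> complex) \<Rightarrow> bool" where
  "completely_multiplicative f \<longleftrightarrow>
     f 1 = 1 \<and> (\<forall>m n. m > 0 \<longrightarrow> n > 0 \<longrightarrow> f (m * n) = f m * f n)"

end

theory Submission
  imports Defs
begin

(*
  Both sides are multiplicative in L: for coprime L = P * M the divisor sums split, \<mu>, \<omega>1 and \<omega>2
  factor, the transform for L is the composition of the transforms for P and for M acting on the
  two coprime parts of the argument of K, and the Euler factor splits accordingly.
  For L = p ^ n, write x = \<omega>1 p, y = \<omega>2 p and k i = K (p ^ i): then J (p ^ i) is k with the
  difference operators 1 - x (shift up) and 1 - y (shift down) applied, truncated at the ends 0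
  and n; the coprime pairs d | p ^ (n - j), e | p ^ j form a hook (p ^ s, 1), (1, p ^ t), and along
  the two arms of the hook the two operators telescope, leaving (1 - x y) k j.
*)

lemma nat_coprime_factor_induct [consumes 1, case_names one prime_power coprime_mult]:
  fixes n :: nat
  assumes "n > 0"
    and one: "P 1"
    and prime_power: "\<And>p k. prime p \<Longrightarrow> k \<ge> 1 \<Longrightarrow> P (p ^ k)"
    and coprime_mult: "\<And>a b. coprime a b \<Longrightarrow> a > 0 \<Longrightarrow> b > 0 \<Longrightarrow> P a \<Longrightarrow> P b \<Longrightarrow> P (a * b)"
  shows "P n"
  using \<open>n > 0\<close>
proof (induction n rule: less_induct)
  case (less n)
  show ?case
  proof (cases "n = 1")
    case True
    with one show ?thesis by simp
  next
    case False
    then obtain p where p: "prime p" "p dvd n"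
      using prime_factor_nat by blast
    define k where "k = multiplicity p n"
    obtain m where m: "n = p ^ k * m" "\<not> p dvd m"
      using multiplicity_decompose'[of n p] less.prems p(1) unfolding k_def
      by (metis not_prime_unit not_gr0)
    have "k \<ge> 1"
      using p less.prems unfolding k_def by (simp add: prime_multiplicity_gt_zero_iff Suc_le_eq)
    have "m > 0"
      using m less.prems by (auto intro: gr0I)
    have "1 < p ^ k"
      using one_less_power[OF prime_gt_1_nat[OF p(1)]] \<open>k \<ge> 1\<close> by simp
    then have "m < n"
      using m(1) \<open>m > 0\<close> by simp
    have "coprime (p ^ k) m"
      using prime_imp_coprime[OF p(1) m(2)] by simp
    moreover have "p ^ k > 0"
      using p(1) by (simp add: prime_gt_0_nat)
    ultimately show ?thesis
      unfolding m(1) using coprime_mult prime_power[OF p(1) \<open>k \<ge> 1\<close>] less.IH[OF \<open>m < n\<close> \<open>m > 0\<close>]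
        \<open>m > 0\<close> by blast
  qed
qed

lemma sum_divisors_coprime_mult:
  fixes X Y :: nat
  assumes "coprime X Y"
  shows "(\<Sum>a | a dvd X * Y. f a) = (\<Sum>x | x dvd X. \<Sum>y | y dvd Y. f (x * y))"
proof -
  have "bij_betw (\<lambda>(x, y). x * y) ({x. x dvd X} \<times> {y. y dvd Y}) {a. a dvd X * Y}"
  proof (rule bij_betw_imageI)
    have "gcd (u * v) X = u" "gcd (u * v) Y = v" if "u dvd X" "v dvd Y" for u v
      using gcd_mult_left_right_cancel[OF coprime_divisors[OF dvd_refl that(2) assms], of u]
        gcd_mult_left_left_cancel[OF coprime_divisors[OF dvd_refl that(1) coprime_commute[THEN iffD1, OF assms]], of v]
        that by (simp_all add: gcd_nat.absorb1)
    then show "inj_on (\<lambda>(x, y). x * y) ({x. x dvd X} \<times> {y. y dvd Y})"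
      by (intro inj_onI) (clarsimp, metis)
    show "(\<lambda>(x, y). x * y) ` ({x. x dvd X} \<times> {y. y dvd Y}) = {a. a dvd X * Y}"
      by (auto intro: mult_dvd_mono elim!: dvd_productE)
  qed
  then have "(\<Sum>a | a dvd X * Y. f a) = (\<Sum>(x, y) \<in> {x. x dvd X} \<times> {y. y dvd Y}. f (x * y))"
    by (simp add: sum.reindex_bij_betw[symmetric] case_prod_unfold)
  also have "\<dots> = (\<Sum>x | x dvd X. \<Sum>y | y dvd Y. f (x * y))"
    by (simp add: sum.cartesian_product)
  finally show ?thesis .
qed

lemma sum_divisor_pairs_coprime_mult:
  fixes X X' Y Y' :: nat
  assumes "coprime X X'" "coprime Y Y'"
  shows "(\<Sum>a | a dvd X * X'. \<Sum>b | b dvd Y * Y'. f a b) =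
         (\<Sum>x | x dvd X. \<Sum>y | y dvd Y. \<Sum>x' | x' dvd X'. \<Sum>y' | y' dvd Y'. f (x * x') (y * y'))"
proof -
  have "(\<Sum>a | a dvd X * X'. \<Sum>b | b dvd Y * Y'. f a b) =
        (\<Sum>x | x dvd X. \<Sum>x' | x' dvd X'. \<Sum>y | y dvd Y. \<Sum>y' | y' dvd Y'. f (x * x') (y * y'))"
    by (simp add: sum_divisors_coprime_mult[OF assms(1)] sum_divisors_coprime_mult[OF assms(2)])
  also have "\<dots> = (\<Sum>x | x dvd X. \<Sum>y | y dvd Y. \<Sum>x' | x' dvd X'. \<Sum>y' | y' dvd Y'. f (x * x') (y * y'))"
    by (rule sum.cong[OF refl], rule sum.swap)
  finally show ?thesis .
qed

lemma sum_divisors_prime_power: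
  assumes "prime (p :: nat)"
  shows "(\<Sum>d | d dvd p ^ n. f d) = (\<Sum>i\<le>n. f (p ^ i))"
proof -
  have "{d. d dvd p ^ n} = (\<lambda>i. p ^ i) ` {..n}"
    using divides_primepow_nat[OF assms] by auto
  moreover have "inj_on (\<lambda>i. p ^ i) {..n}"
    using prime_gt_1_nat[OF assms] by (auto intro!: inj_onI)
  ultimately show ?thesis
    by (simp add: sum.reindex)
qed

lemma sum_coprime_pairs:
  fixes A B :: nat
  assumes "A > 0" "B > 0"
  shows "(\<Sum>(d, e) \<in> {(d, e). d dvd A \<and> e dvd B \<and> coprime d e}. f d e) =
         (\<Sum>d | d dvd A. \<Sum>e | e dvd B. if coprime d e then f d e else 0)"
proof -
  have "finite ({d. d dvd A} \<times> {e. e dvd B})"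
    using assms by auto
  moreover have "{(d, e). d dvd A \<and> e dvd B \<and> coprime d e} =
                 {x \<in> {d. d dvd A} \<times> {e. e dvd B}. coprime (fst x) (snd x)}"
    by auto
  ultimately show ?thesis
    by (simp add: sum.inter_filter case_prod_unfold sum.cartesian_product)
qed

lemma mult_div_dvd_mult:
  fixes a b d e :: nat
  assumes "e dvd b" "d dvd a"
  shows "b * d div e dvd b * a"
  using assms by (cases "e = 0") (auto simp: dvd_def)

lemma moebius_mu_mult:
  assumes "coprime (a :: nat) b"
  shows "moebius_mu (a * b) = moebius_mu a * moebius_mu b"
proof (cases "a = 0 \<or> b = 0")
  case True
  then show ?thesis
    using assms by (auto simp: moebius_mu_def)
next
  case False
  have "squarefree (a * b) \<longleftrightarrow> squarefree a \<and> squarefree b"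
    using assms squarefree_mult_coprime squarefree_multD by metis
  moreover have "prime_factors a \<inter> prime_factors b = {}"
    using assms by (metis coprime_common_divisor disjoint_iff in_prime_factors_iff not_prime_unit)
  then have "card (prime_factors (a * b)) = card (prime_factors a) + card (prime_factors b)"
    using False by (simp add: prime_factors_product card_Un_disjoint)
  ultimately show ?thesis
    using False by (auto simp: moebius_mu_def power_add)
qed

lemma moebius_mu_prime_power:
  assumes "prime (p :: nat)"
  shows "moebius_mu (p ^ k) = (if k = 0 then 1 else if k = 1 then -1 else 0)"
proof -
  have "squarefree p" "\<not> is_unit p"
    using assms squarefree_prime by auto
  then show ?thesis
    using squarefree_power_iff[of p k] assms by (auto simp: moebius_mu_def prime_prime_factors)
qed

lemma sum_moebius_mu_prime_power:
  assumes "prime (p :: nat)"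
  shows "(\<Sum>k\<le>i. moebius_mu (p ^ k) * f k) = (if i = 0 then f 0 else f 0 - f 1)"
proof (induction i)
  case (Suc i)
  then show ?case
    using moebius_mu_prime_power[OF assms, of "Suc i"] by (cases "i = 0") simp_all
qed (simp add: moebius_mu_def)

lemma completely_multiplicativeD:
  assumes "completely_multiplicative w" "x > 0" "y > 0"
  shows "w (x * y) = w x * w y"
  using assms unfolding completely_multiplicative_def by auto

lemma completely_multiplicative_power:
  assumes "completely_multiplicative w" "(p :: nat) > 0"
  shows "w (p ^ i) = w p ^ i"
proof (induction i)
  case 0
  then show ?case
    using assms(1) by (simp add: completely_multiplicative_def)
next
  case (Suc i)
  then show ?case
    using completely_multiplicativeD[OF assms(1), of p "p ^ i"] assms(2) by simp
qed

lemma sum_atMost_hook: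
  fixes g :: "nat \<Rightarrow> nat \<Rightarrow> 'a :: ab_group_add"
  shows "(\<Sum>s\<le>a. \<Sum>t\<le>b. if s = 0 \<or> t = 0 then g s t else 0) =
         (\<Sum>s\<le>a. g s 0) + (\<Sum>t\<le>b. g 0 t) - g 0 0"
proof (induction a)
  case (Suc a)
  have "(\<Sum>t\<le>b. if Suc a = 0 \<or> t = 0 then g (Suc a) t else 0) = g (Suc a) 0"
    by simp
  with Suc show ?case
    by simp
qed simp

lemma sum_atMost_Suc_reflect:
  fixes y :: "'a :: comm_semiring_1"
  shows "(\<Sum>t\<le>Suc m. y ^ t * f (Suc m - t)) = f (Suc m) + y * (\<Sum>t\<le>m. y ^ t * f (m - t))"
  by (subst sum.atMost_Suc_shift) (simp add: sum_distrib_left algebra_simps del: sum.atMost_Suc)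

text \<open>
  The hypothesis \<open>J_eq\<close> is \<open>moebius_transform_prime_power\<close> below, written in the coordinates
  \<open>k i = K (p ^ i)\<close>, \<open>x = \<omega>1 p\<close>, \<open>y = \<omega>2 p\<close>.
\<close>

context
  fixes x y :: "'a :: comm_ring_1" and k J :: "nat \<Rightarrow> 'a" and n :: nat
  assumes J_eq: "\<And>i. i \<le> n \<Longrightarrow> J i =
      k i - (if i < n then x * k (i + 1) else 0) - (if 0 < i then y * k (i - 1) else 0)
        + (if 0 < i \<and> i < n then x * y * k i else 0)"
    and n_ge_1: "1 \<le> n"
begin

lemma telescoping_sum_up_partial:
  assumes "j + m < n"
  shows "(\<Sum>s\<le>m. x ^ s * J (j + s)) =
         k j - (if 0 < j then y * k (j - 1) else 0) - x ^ (m + 1) * (k (j + m + 1) - y * k (j + m))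
           - (if j = 0 then x * y * k 0 else 0)"
  using assms
proof (induction m)
  case 0
  then show ?case
    using J_eq[of j] by (auto simp: algebra_simps)
next
  case (Suc m)
  have J_step: "J (j + Suc m) = k (j + Suc m) - x * k (j + Suc m + 1) - y * k (j + m) + x * y * k (j + Suc m)"
    using J_eq[of "j + Suc m"] Suc.prems by auto
  show ?case
    unfolding sum.atMost_Suc Suc.IH[OF Suc_lessD[OF Suc.prems[unfolded add_Suc_right]]] J_step
    by (simp add: algebra_simps)
qed

lemma telescoping_sum_up:
  assumes "j \<le> n"
  shows "(\<Sum>s\<le>n - j. x ^ s * J (j + s)) =
         k j - (if 0 < j then y * k (j - 1) else 0) - (if j = 0 then x * y * k 0 else 0)"
proof (cases "j = n")
  case True
  then show ?thesis
    using J_eq[of n] n_ge_1 by auto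
next
  case False
  define m where "m = n - j - 1"
  have m: "n - j = Suc m" "j + m < n" "Suc (j + m) = n"
    unfolding m_def using assms False by auto
  have J_last: "J n = k n - y * k (n - 1)"
    using J_eq[of n] n_ge_1 by auto
  have last_index: "k (j + m + 1) = k n" "k (j + m) = k (n - 1)" "J (j + Suc m) = J n"
    using m(3) by auto
  show ?thesis
    unfolding m(1) sum.atMost_Suc telescoping_sum_up_partial[OF m(2)] last_index J_last
    by (simp add: algebra_simps)
qed

lemma telescoping_sum_down:
  assumes "m < n"
  shows "(\<Sum>t\<le>m. y ^ t * J (m - t)) = k m - x * k (m + 1)"
  using assms
proof (induction m)
  case 0
  then show ?case
    using J_eq[of 0] by auto
next
  case (Suc m)
  have IH: "(\<Sum>t\<le>m. y ^ t * J (m - t)) = k m - x * k (m + 1)"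
    using Suc by simp
  have "J (Suc m) = k (Suc m) - x * k (Suc m + 1) - y * k m + x * y * k (Suc m)"
    using J_eq[of "Suc m"] Suc.prems by auto
  then show ?case
    unfolding sum_atMost_Suc_reflect IH by (simp add: algebra_simps)
qed
lemma telescoping_hook_sum:
  assumes "j \<le> n"
  shows "(\<Sum>s\<le>n - j. \<Sum>t\<le>j. if s = 0 \<or> t = 0 then x ^ s * y ^ t * J (j + s - t) else 0) =
         (1 - x * y) * k j"
proof -
  have "(\<Sum>s\<le>n - j. \<Sum>t\<le>j. if s = 0 \<or> t = 0 then x ^ s * y ^ t * J (j + s - t) else 0) =
        (\<Sum>s\<le>n - j. x ^ s * J (j + s)) + (\<Sum>t\<le>j. y ^ t * J (j - t)) - J j"
    by (simp add: sum_atMost_hook)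
  also have "\<dots> = (1 - x * y) * k j"
  proof (cases j)
    case 0
    then show ?thesis
      using telescoping_sum_up[OF assms] by (simp add: algebra_simps)
  next
    case (Suc m)
    have "(\<Sum>t\<le>j. y ^ t * J (j - t)) = J j + y * (\<Sum>t\<le>m. y ^ t * J (m - t))"
      unfolding Suc by (rule sum_atMost_Suc_reflect)
    also have "\<dots> = J j + y * (k m - x * k (m + 1))"
      using telescoping_sum_down[of m] Suc assms by simp
    finally have descending: "(\<Sum>t\<le>j. y ^ t * J (j - t)) = J j + y * (k m - x * k (m + 1))" .
    have ascending: "(\<Sum>s\<le>n - j. x ^ s * J (j + s)) = k j - y * k m"
      using telescoping_sum_up[OF assms] Suc by simp
    show ?thesis
      unfolding descending ascending using Suc by (simp add: algebra_simps)
  qed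
  finally show ?thesis .
qed

end

definition moebius_transform ::
    "(nat \<Rightarrow> complex) \<Rightarrow> (nat \<Rightarrow> complex) \<Rightarrow> nat \<Rightarrow> (nat \<Rightarrow> complex) \<Rightarrow> nat \<Rightarrow> complex" where
  "moebius_transform w1 w2 L K g = (\<Sum>a | a dvd g. \<Sum>b | b dvd L div g.
      moebius_mu a * moebius_mu b * w2 a * w1 b * K (b * g div a))"

definition recovery_sum ::
    "(nat \<Rightarrow> complex) \<Rightarrow> (nat \<Rightarrow> complex) \<Rightarrow> nat \<Rightarrow> (nat \<Rightarrow> complex) \<Rightarrow> nat \<Rightarrow> complex" where
  "recovery_sum w1 w2 L K B = (\<Sum>d | d dvd L div B. \<Sum>e | e dvd B.
      (if coprime d e then w1 d * w2 e else 0) * moebius_transform w1 w2 L K (B * d div e))"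

definition euler_factor :: "(nat \<Rightarrow> complex) \<Rightarrow> (nat \<Rightarrow> complex) \<Rightarrow> nat \<Rightarrow> complex" where
  "euler_factor w1 w2 L = (\<Prod>p | prime p \<and> p dvd L. 1 - w1 p * w2 p)"

definition recovery_formula_holds :: "(nat \<Rightarrow> complex) \<Rightarrow> (nat \<Rightarrow> complex) \<Rightarrow> nat \<Rightarrow> bool" where
  "recovery_formula_holds w1 w2 L \<longleftrightarrow>
     (\<forall>K B. B dvd L \<longrightarrow> recovery_sum w1 w2 L K B = euler_factor w1 w2 L * K B)"

lemma moebius_transform_sum:
  "moebius_transform w1 w2 L (\<lambda>h. \<Sum>i\<in>I. F i h) g = (\<Sum>i\<in>I. moebius_transform w1 w2 L (F i) g)"
  unfolding moebius_transform_def by (simp add: sum_distrib_left sum.swap[of _ I])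

lemma moebius_transform_scale:
  "moebius_transform w1 w2 L (\<lambda>h. c * F h) g = c * moebius_transform w1 w2 L F g"
  unfolding moebius_transform_def by (simp add: sum_distrib_left algebra_simps)

lemma recovery_sum_scale:
  "recovery_sum w1 w2 L (\<lambda>h. c * F h) B = c * recovery_sum w1 w2 L F B"
  unfolding recovery_sum_def moebius_transform_scale by (simp add: sum_distrib_left algebra_simps)

lemma euler_factor_mult:
  fixes P M :: nat
  assumes "coprime P M" "P > 0" "M > 0"
  shows "euler_factor w1 w2 (P * M) = euler_factor w1 w2 P * euler_factor w1 w2 M"
proof -
  have "{p. prime p \<and> p dvd P * M} = {p. prime p \<and> p dvd P} \<union> {p. prime p \<and> p dvd M}"
    by (auto simp: prime_dvd_mult_iff)
  moreover have "finite {p. prime p \<and> p dvd P}" "finite {p. prime p \<and> p dvd M}"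
    using assms(2,3) by (auto elim: finite_subset[rotated, of "{d. d dvd _}"])
  moreover have "{p. prime p \<and> p dvd P} \<inter> {p. prime p \<and> p dvd M} = {}"
    using assms(1) by (auto dest: coprime_common_divisor simp: not_prime_unit)
  ultimately show ?thesis
    unfolding euler_factor_def by (simp add: prod.union_disjoint)
qed

lemma euler_factor_prime_power:
  assumes "prime (p :: nat)" "n \<ge> 1"
  shows "euler_factor w1 w2 (p ^ n) = 1 - w1 p * w2 p"
proof -
  have "{q. prime q \<and> q dvd p ^ n} = {p}"
    using assms by (auto dest: prime_dvd_power primes_dvd_imp_eq intro: dvd_power)
  then show ?thesis
    unfolding euler_factor_def by simp
qed

context
  fixes w1 w2 :: "nat \<Rightarrow> complex"
  assumes mult1: "completely_multiplicative w1" and mult2: "completely_multiplicative w2"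
begin

lemma moebius_weight_mult:
  fixes a a' b b' :: nat
  assumes "coprime a a'" "coprime b b'" "a > 0" "a' > 0" "b > 0" "b' > 0"
  shows "moebius_mu (a * a') * moebius_mu (b * b') * w2 (a * a') * w1 (b * b') =
         (moebius_mu a * moebius_mu b * w2 a * w1 b) * (moebius_mu a' * moebius_mu b' * w2 a' * w1 b')"
  using assms
  by (simp add: moebius_mu_mult completely_multiplicativeD[OF mult1] completely_multiplicativeD[OF mult2])

lemma coprime_weight_mult:
  fixes d d' e e' :: nat
  assumes "coprime d e'" "coprime e d'" "d > 0" "d' > 0" "e > 0" "e' > 0"
  shows "(if coprime (d * d') (e * e') then w1 (d * d') * w2 (e * e') else 0) =
         (if coprime d e then w1 d * w2 e else 0) * (if coprime d' e' then w1 d' * w2 e' else 0)"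
proof -
  have "coprime (d * d') (e * e') \<longleftrightarrow> coprime d e \<and> coprime d' e'"
    using assms(1,2) by (auto simp: coprime_commute)
  then show ?thesis
    using assms(3-) by (simp add: completely_multiplicativeD[OF mult1] completely_multiplicativeD[OF mult2])
qed

lemma moebius_transform_mult:
  fixes P M gP gM :: nat
  assumes coprime: "coprime P M" and pos: "P > 0" "M > 0" and dvd: "gP dvd P" "gM dvd M"
  shows "moebius_transform w1 w2 (P * M) K (gP * gM) =
         moebius_transform w1 w2 P (\<lambda>h. moebius_transform w1 w2 M (\<lambda>m. K (h * m)) gM) gP"
proof -
  define c where "c = (\<lambda>a b. moebius_mu a * moebius_mu b * w2 a * w1 b)"
  have g_pos: "gP > 0" "gM > 0"
    using dvd pos by (auto intro: dvd_pos_nat)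
  have g_coprime: "coprime gP gM"
    using coprime dvd by (rule coprime_divisors[rotated 2])
  have quot_dvd: "P div gP dvd P" "M div gM dvd M"
    using dvd by (metis dvd_mult_div_cancel dvd_triv_right)+
  have quot_coprime: "coprime (P div gP) (M div gM)"
    using quot_dvd coprime by (rule coprime_divisors)
  have "moebius_transform w1 w2 (P * M) K (gP * gM) =
      (\<Sum>a | a dvd gP * gM. \<Sum>b | b dvd (P div gP) * (M div gM). c a b * K (b * (gP * gM) div a))"
    unfolding moebius_transform_def c_def by (simp add: div_mult_div_if_dvd dvd)
  also have "\<dots> = (\<Sum>aP | aP dvd gP. \<Sum>bP | bP dvd P div gP. \<Sum>aM | aM dvd gM. \<Sum>bM | bM dvd M div gM.
        c (aP * aM) (bP * bM) * K (bP * bM * (gP * gM) div (aP * aM)))"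
    by (rule sum_divisor_pairs_coprime_mult[OF g_coprime quot_coprime])
  also have "\<dots> = (\<Sum>aP | aP dvd gP. \<Sum>bP | bP dvd P div gP. \<Sum>aM | aM dvd gM. \<Sum>bM | bM dvd M div gM.
        c aP bP * (c aM bM * K ((bP * gP div aP) * (bM * gM div aM))))"
  proof (intro sum.cong refl)
    fix aP bP aM bM
    assume h: "aP \<in> {a. a dvd gP}" "bP \<in> {b. b dvd P div gP}" "aM \<in> {a. a dvd gM}" "bM \<in> {b. b dvd M div gM}"
    have "coprime aP aM" "coprime bP bM"
      using h g_coprime quot_coprime by (auto intro: coprime_divisors)
    moreover have "aP > 0" "aM > 0" "bP > 0" "bM > 0"
      using h g_pos quot_dvd pos by (auto intro: dvd_pos_nat)
    ultimately have "c (aP * aM) (bP * bM) = c aP bP * c aM bM"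
      unfolding c_def by (rule moebius_weight_mult)
    moreover have "bP * bM * (gP * gM) div (aP * aM) = (bP * gP div aP) * (bM * gM div aM)"
      using h by (simp add: div_mult_div_if_dvd ac_simps)
    ultimately show "c (aP * aM) (bP * bM) * K (bP * bM * (gP * gM) div (aP * aM)) =
        c aP bP * (c aM bM * K ((bP * gP div aP) * (bM * gM div aM)))"
      by simp
  qed
  also have "\<dots> = moebius_transform w1 w2 P (\<lambda>h. moebius_transform w1 w2 M (\<lambda>m. K (h * m)) gM) gP"
    unfolding moebius_transform_def c_def by (simp add: sum_distrib_left mult.assoc)
  finally show ?thesis .
qed

lemma recovery_sum_mult:
  fixes P M BP BM :: nat
  assumes coprime: "coprime P M" and pos: "P > 0" "M > 0" and dvd: "BP dvd P" "BM dvd M"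
  shows "recovery_sum w1 w2 (P * M) K (BP * BM) =
         recovery_sum w1 w2 P (\<lambda>h. recovery_sum w1 w2 M (\<lambda>m. K (h * m)) BM) BP"
proof -
  define c where "c = (\<lambda>d e. if coprime d e then w1 d * w2 e else 0)"
  define T where "T = (\<lambda>N K g. moebius_transform w1 w2 N K g)"
  have B_coprime: "coprime BP BM"
    using coprime dvd by (rule coprime_divisors[rotated 2])
  have quot_dvd: "P div BP dvd P" "M div BM dvd M"
    using dvd by (metis dvd_mult_div_cancel dvd_triv_right)+
  have quot_coprime: "coprime (P div BP) (M div BM)"
    using quot_dvd coprime by (rule coprime_divisors)
  have "recovery_sum w1 w2 (P * M) K (BP * BM) =
     (\<Sum>d | d dvd (P div BP) * (M div BM). \<Sum>e | e dvd BP * BM. c d e * T (P * M) K (BP * BM * d div e))"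
    unfolding recovery_sum_def c_def T_def by (simp add: div_mult_div_if_dvd dvd)
  also have "\<dots> = (\<Sum>dP | dP dvd P div BP. \<Sum>eP | eP dvd BP. \<Sum>dM | dM dvd M div BM. \<Sum>eM | eM dvd BM.
      c (dP * dM) (eP * eM) * T (P * M) K (BP * BM * (dP * dM) div (eP * eM)))"
    by (rule sum_divisor_pairs_coprime_mult[OF quot_coprime B_coprime])
  also have "\<dots> = (\<Sum>dP | dP dvd P div BP. \<Sum>eP | eP dvd BP. \<Sum>dM | dM dvd M div BM. \<Sum>eM | eM dvd BM.
      c dP eP * (c dM eM * T P (\<lambda>h. T M (\<lambda>m. K (h * m)) (BM * dM div eM)) (BP * dP div eP)))"
  proof (intro sum.cong refl)
    fix dP eP dM eM
    assume h: "dP \<in> {d. d dvd P div BP}" "eP \<in> {e. e dvd BP}" "dM \<in> {d. d dvd M div BM}" "eM \<in> {e. e dvd BM}"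
    have "coprime dP eM" "coprime eP dM"
      using h dvd quot_dvd coprime by (auto intro: coprime_divisors dvd_trans)
    moreover have "dP > 0" "dM > 0" "eP > 0" "eM > 0"
      using h dvd quot_dvd pos by (auto intro: dvd_pos_nat)
    ultimately have "c (dP * dM) (eP * eM) = c dP eP * c dM eM"
      unfolding c_def by (rule coprime_weight_mult)
    moreover have "BP * BM * (dP * dM) div (eP * eM) = (BP * dP div eP) * (BM * dM div eM)"
      using h by (simp add: div_mult_div_if_dvd ac_simps)
    moreover have "BP * dP div eP dvd P" "BM * dM div eM dvd M"
      using mult_div_dvd_mult[of eP BP dP "P div BP"] mult_div_dvd_mult[of eM BM dM "M div BM"] h dvd
      by simp_all
    ultimately show "c (dP * dM) (eP * eM) * T (P * M) K (BP * BM * (dP * dM) div (eP * eM)) =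
        c dP eP * (c dM eM * T P (\<lambda>h. T M (\<lambda>m. K (h * m)) (BM * dM div eM)) (BP * dP div eP))"
      unfolding T_def by (simp add: moebius_transform_mult[OF coprime pos])
  qed
  also have "\<dots> = (\<Sum>dP | dP dvd P div BP. \<Sum>eP | eP dvd BP.
      c dP eP * T P (\<lambda>h. \<Sum>dM | dM dvd M div BM. \<Sum>eM | eM dvd BM.
          c dM eM * T M (\<lambda>m. K (h * m)) (BM * dM div eM)) (BP * dP div eP))"
    unfolding T_def by (simp only: moebius_transform_sum moebius_transform_scale sum_distrib_left)
  also have "\<dots> = recovery_sum w1 w2 P (\<lambda>h. recovery_sum w1 w2 M (\<lambda>m. K (h * m)) BM) BP"
    unfolding recovery_sum_def c_def T_def by simp
  finally show ?thesis .
qed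

lemma recovery_formula_mult:
  fixes P M :: nat
  assumes "coprime P M" "P > 0" "M > 0"
    and "recovery_formula_holds w1 w2 P" "recovery_formula_holds w1 w2 M"
  shows "recovery_formula_holds w1 w2 (P * M)"
  unfolding recovery_formula_holds_def
proof (intro allI impI)
  fix K :: "nat \<Rightarrow> complex" and B
  assume "B dvd P * M"
  then obtain BP BM where B: "B = BP * BM" "BP dvd P" "BM dvd M"
    by (auto elim: dvd_productE)
  have "recovery_sum w1 w2 (P * M) K B =
        recovery_sum w1 w2 P (\<lambda>h. recovery_sum w1 w2 M (\<lambda>m. K (h * m)) BM) BP"
    unfolding B(1) using assms(1-3) B(2,3) by (rule recovery_sum_mult)
  also have "\<dots> = recovery_sum w1 w2 P (\<lambda>h. euler_factor w1 w2 M * K (h * BM)) BP"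
    using assms(5) B(3) unfolding recovery_formula_holds_def by (simp add: mult.commute)
  also have "\<dots> = euler_factor w1 w2 M * (euler_factor w1 w2 P * K (BP * BM))"
    using assms(4) B(2) unfolding recovery_sum_scale recovery_formula_holds_def by simp
  finally show "recovery_sum w1 w2 (P * M) K B = euler_factor w1 w2 (P * M) * K B"
    using euler_factor_mult[OF assms(1-3)] B(1) by simp
qed

lemma moebius_transform_prime_power:
  assumes p: "prime p" and "i \<le> n"
  shows "moebius_transform w1 w2 (p ^ n) K (p ^ i) =
      K (p ^ i) - (if i < n then w1 p * K (p ^ (i + 1)) else 0)
        - (if 0 < i then w2 p * K (p ^ (i - 1)) else 0)
        + (if 0 < i \<and> i < n then w1 p * w2 p * K (p ^ i) else 0)"
proof -
  have "p > 0"
    using p prime_gt_0_nat by blast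
  have "p ^ n div p ^ i = p ^ (n - i)"
    using \<open>i \<le> n\<close> \<open>p > 0\<close> by (simp add: power_diff)
  then have "moebius_transform w1 w2 (p ^ n) K (p ^ i) = (\<Sum>a\<le>i. \<Sum>b\<le>n - i.
      moebius_mu (p ^ a) * moebius_mu (p ^ b) * w2 (p ^ a) * w1 (p ^ b) * K (p ^ b * p ^ i div p ^ a))"
    unfolding moebius_transform_def by (simp only: sum_divisors_prime_power[OF p])
  also have "\<dots> = (\<Sum>a\<le>i. moebius_mu (p ^ a) * (\<Sum>b\<le>n - i. moebius_mu (p ^ b) *
         (w2 p ^ a * w1 p ^ b * K (p ^ (i + b - a)))))"
    unfolding sum_distrib_left
  proof (intro sum.cong refl)
    fix a b
    assume "a \<in> {..i}" "b \<in> {..n - i}"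
    then have "p ^ b * p ^ i div p ^ a = p ^ (i + b - a)"
      using \<open>p > 0\<close> by (simp add: power_add[symmetric] power_diff add.commute)
    then show "moebius_mu (p ^ a) * moebius_mu (p ^ b) * w2 (p ^ a) * w1 (p ^ b) * K (p ^ b * p ^ i div p ^ a) =
        moebius_mu (p ^ a) * (moebius_mu (p ^ b) * (w2 p ^ a * w1 p ^ b * K (p ^ (i + b - a))))"
      using completely_multiplicative_power[OF mult1 \<open>p > 0\<close>]
        completely_multiplicative_power[OF mult2 \<open>p > 0\<close>]
      by (simp add: algebra_simps)
  qed
  also have "\<dots> = K (p ^ i) - (if i < n then w1 p * K (p ^ (i + 1)) else 0)
        - (if 0 < i then w2 p * K (p ^ (i - 1)) else 0)
        + (if 0 < i \<and> i < n then w1 p * w2 p * K (p ^ i) else 0)"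
    using \<open>i \<le> n\<close> by (auto simp: sum_moebius_mu_prime_power[OF p] algebra_simps)
  finally show ?thesis .
qed

lemma recovery_formula_prime_power:
  assumes p: "prime p" and "n \<ge> 1"
  shows "recovery_formula_holds w1 w2 (p ^ n)"
  unfolding recovery_formula_holds_def
proof (intro allI impI)
  fix K :: "nat \<Rightarrow> complex" and B
  assume "B dvd p ^ n"
  then obtain j where j: "j \<le> n" "B = p ^ j"
    using divides_primepow_nat[OF p] by auto
  have "p > 0"
    using p prime_gt_0_nat by blast
  define J where "J i = moebius_transform w1 w2 (p ^ n) K (p ^ i)" for i
  have "p ^ n div p ^ j = p ^ (n - j)"
    using j \<open>p > 0\<close> by (simp add: power_diff)
  then have "recovery_sum w1 w2 (p ^ n) K B = (\<Sum>s\<le>n - j. \<Sum>t\<le>j.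
      (if coprime (p ^ s) (p ^ t) then w1 (p ^ s) * w2 (p ^ t) else 0) *
        moebius_transform w1 w2 (p ^ n) K (p ^ j * p ^ s div p ^ t))"
    unfolding recovery_sum_def j(2) by (simp only: sum_divisors_prime_power[OF p])
  also have "\<dots> = (\<Sum>s\<le>n - j. \<Sum>t\<le>j.
      if s = 0 \<or> t = 0 then w1 p ^ s * w2 p ^ t * J (j + s - t) else 0)"
  proof (intro sum.cong refl)
    fix s t
    assume "s \<in> {..n - j}" "t \<in> {..j}"
    then have "p ^ j * p ^ s div p ^ t = p ^ (j + s - t)"
      using \<open>p > 0\<close> by (simp add: power_add[symmetric] power_diff)
    moreover have "coprime (p ^ s) (p ^ t) \<longleftrightarrow> s = 0 \<or> t = 0"
      using p by auto
    ultimately show "(if coprime (p ^ s) (p ^ t) then w1 (p ^ s) * w2 (p ^ t) else 0) *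
          moebius_transform w1 w2 (p ^ n) K (p ^ j * p ^ s div p ^ t) =
        (if s = 0 \<or> t = 0 then w1 p ^ s * w2 p ^ t * J (j + s - t) else 0)"
      using completely_multiplicative_power[OF mult1 \<open>p > 0\<close>]
        completely_multiplicative_power[OF mult2 \<open>p > 0\<close>]
      unfolding J_def by simp
  qed
  also have "\<dots> = (1 - w1 p * w2 p) * K (p ^ j)"
    using telescoping_hook_sum[of n J "\<lambda>i. K (p ^ i)" "w1 p" "w2 p", OF _ \<open>n \<ge> 1\<close> j(1)]
      moebius_transform_prime_power[OF p] unfolding J_def by simp
  finally show "recovery_sum w1 w2 (p ^ n) K B = euler_factor w1 w2 (p ^ n) * K B"
    using euler_factor_prime_power[OF p \<open>n \<ge> 1\<close>] j(2) by simp
qed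

lemma recovery_formula_one: "recovery_formula_holds w1 w2 1"
proof -
  have "w1 1 = 1" "w2 1 = 1" "moebius_mu 1 = 1"
    using mult1 mult2 by (simp_all add: completely_multiplicative_def moebius_mu_def)
  moreover have "{p. prime p \<and> p dvd (1 :: nat)} = {}"
    by auto
  then have "euler_factor w1 w2 1 = 1"
    unfolding euler_factor_def by (simp only: prod.empty)
  ultimately show ?thesis
    unfolding recovery_formula_holds_def recovery_sum_def moebius_transform_def by simp
qed

lemma recovery_formula:
  assumes "L > 0"
  shows "recovery_formula_holds w1 w2 L"
  using assms
proof (induction L rule: nat_coprime_factor_induct)
  case one
  then show ?case by (rule recovery_formula_one)
next
  case (prime_power p k)
  then show ?case by (rule recovery_formula_prime_power)
next
  case (coprime_mult a b)
  then show ?case by (rule recovery_formula_mult)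
qed

end

theorem lemma7p2:
  fixes L A B :: nat and \<omega>1 \<omega>2 K :: "nat \<Rightarrow> complex" and J :: "nat \<Rightarrow> complex"
  assumes "L > 0"
    and "completely_multiplicative \<omega>1" and "completely_multiplicative \<omega>2"
    and "\<And>p. prime p \<Longrightarrow> p dvd L \<Longrightarrow> 1 - \<omega>1 p * \<omega>2 p \<noteq> 0"
    and "\<And>g. g dvd L \<Longrightarrow> J g =
           (\<Sum>a\<in>{a. a dvd g}. \<Sum>b\<in>{b. b dvd L div g}.
              moebius_mu a * moebius_mu b * \<omega>2 a * \<omega>1 b * K (b * g div a))"
    and "L = A * B"
  shows "K B = (\<Prod>p\<in>{p. prime p \<and> p dvd L}. inverse (1 - \<omega>1 p * \<omega>2 p)) *
           (\<Sum>(d, e)\<in>{(d, e). d dvd A \<and> e dvd B \<and> coprime d e}.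
              \<omega>1 d * \<omega>2 e * J (B * d div e))"
proof -
  have pos: "A > 0" "B > 0"
    using assms(1,6) by auto
  have "(\<Sum>(d, e)\<in>{(d, e). d dvd A \<and> e dvd B \<and> coprime d e}. \<omega>1 d * \<omega>2 e * J (B * d div e))
      = recovery_sum \<omega>1 \<omega>2 L K B"
    unfolding sum_coprime_pairs[OF pos] recovery_sum_def
    using assms(5,6) mult_div_dvd_mult[of _ B _ A] pos
    by (intro sum.cong refl) (auto simp: moebius_transform_def mult.commute)
  also have "\<dots> = euler_factor \<omega>1 \<omega>2 L * K B"
    using recovery_formula[OF assms(2,3,1)] assms(6) unfolding recovery_formula_holds_def by simp
  finally have "(\<Sum>(d, e)\<in>{(d, e). d dvd A \<and> e dvd B \<and> coprime d e}. \<omega>1 d * \<omega>2 e * J (B * d div e))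
      = euler_factor \<omega>1 \<omega>2 L * K B" .
  moreover have "finite {p. prime p \<and> p dvd L}"
    using assms(1) by (auto elim: finite_subset[rotated, of "{d. d dvd L}"])
  then have "euler_factor \<omega>1 \<omega>2 L \<noteq> 0"
    unfolding euler_factor_def using assms(4) by simp
  moreover have "(\<Prod>p\<in>{p. prime p \<and> p dvd L}. inverse (1 - \<omega>1 p * \<omega>2 p)) =
      inverse (euler_factor \<omega>1 \<omega>2 L)"
    using prod_inversef[of "\<lambda>p. 1 - \<omega>1 p * \<omega>2 p"] unfolding euler_factor_def by (simp add: comp_def)
  ultimately show ?thesis
    by simp
qed

end
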